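(* Let $A$ be a real $n\times n$ matrix with strictly negative diagonal and clique complex $X=X(G_A)$, and let $|A|$ denote the matrix of absolute values of the entries of $A$. Suppose $\det A_\sigma=0$ for all $\sigma\in X$ with $|\sigma|=2$ or $3$. Then: (a) if $H^1(X;\mathbb{Z}_2)=0$, then $A$ is a bipartite matrix; (b) if $H^1(X;\mathbb{R})=0$, then $|A|$ has a rank $1$ completion; (c) if $H^1(X;\mathbb{R})=H^1(X;\mathbb{Z}_2)=0$, then $A$ has a rank $1$ completion.
   Context: The connectivity graph $G_A$ is the simple graph on $\{1,\dots,n\}$ containing edge $(ij)$, $i\ne j$, unless $A_{ij}=A_{ji}=0$; $X(G_A)$ is its clique complex, i.e. the abstract simplicial complex of cliques (sets of pairwise adjacent vertices), with simplicial cohomology. $A_\sigma$ is the principal submatrix on $\sigma$. A matrix $\bar A$ is a completion of $A$ if $\bar A_{ij}=A_{ij}$ for all $i=j$ and for all $i\ne j$ with $(ij)$ an edge of $G_A$ (for $|A|$, completions are defined with the same graph $G_A$). A real $n\times n$ matrix $A$ is bipartite if $\{1,\dots,n\}$ can be partitioned into disjoint sets $\sigma,\bar\sigma$ such that: if $i\in\sigma,j\in\bar\sigma$ then $A_{ij}\ge0$ and $A_{ji}\ge0$; and if $i,j\in\sigma$ or $i,j\in\bar\sigma$ then $A_{ij}\le0$ and $A_{ji}\le0$. *)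

theory Defs
  imports "HOL-Analysis.Analysis" "HOL-Library.Z2"
begin

definition conn_adj :: "real^'n^'n \<Rightarrow> 'n \<Rightarrow> 'n \<Rightarrow> bool" where
  "conn_adj A i j \<longleftrightarrow> i \<noteq> j \<and> \<not> (A$i$j = 0 \<and> A$j$i = 0)"

definition clique_simplex :: "real^'n^'n \<Rightarrow> 'n set \<Rightarrow> bool" where
  "clique_simplex A \<sigma> \<longleftrightarrow> \<sigma> \<noteq> {} \<and> (\<forall>i\<in>\<sigma>. \<forall>j\<in>\<sigma>. i \<noteq> j \<longrightarrow> conn_adj A i j)"

definition principal_det :: "real^'n^'n \<Rightarrow> 'n set \<Rightarrow> real" where
  "principal_det A \<sigma> = (\<Sum>p\<in>{p. p permutes \<sigma>}. of_int (sign p) * (\<Prod>i\<in>\<sigma>. A$i$(p i)))"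

text \<open>Vanishing of the first simplicial cohomology, with coefficients in the field 'f, of the
  clique complex of the graph with edge relation adj: every alternating 1-cochain (a function on
  oriented edges) whose coboundary vanishes on all 2-simplices (triangles) is the coboundary of a
  0-cochain.\<close>
definition H1_clique_vanishes :: "('n \<Rightarrow> 'n \<Rightarrow> bool) \<Rightarrow> 'f::field itself \<Rightarrow> bool" where
  "H1_clique_vanishes adj _ \<longleftrightarrow>
     (\<forall>c :: 'n \<Rightarrow> 'n \<Rightarrow> 'f.
        ((\<forall>i j. adj i j \<longrightarrow> c j i = - c i j) \<and>
         (\<forall>i j k. adj i j \<and> adj j k \<and> adj i k \<longrightarrow> c j k - c i k + c i j = 0))
        \<longrightarrow> (\<exists>f :: 'n \<Rightarrow> 'f. \<forall>i j. adj i j \<longrightarrow> c i j = f j - f i))"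

definition bipartite_matrix :: "real^'n^'n \<Rightarrow> bool" where
  "bipartite_matrix A \<longleftrightarrow> (\<exists>\<sigma> :: 'n set.
     (\<forall>i j. i \<in> \<sigma> \<and> j \<notin> \<sigma> \<longrightarrow> A$i$j \<ge> 0 \<and> A$j$i \<ge> 0) \<and>
     (\<forall>i j. ((i \<in> \<sigma> \<and> j \<in> \<sigma>) \<or> (i \<notin> \<sigma> \<and> j \<notin> \<sigma>)) \<longrightarrow> A$i$j \<le> 0 \<and> A$j$i \<le> 0))"

definition abs_matrix :: "real^'n^'n \<Rightarrow> real^'n^'n" where
  "abs_matrix A = (\<chi> i j. \<bar>A$i$j\<bar>)"

definition is_completion :: "real^'n^'n \<Rightarrow> real^'n^'n \<Rightarrow> real^'n^'n \<Rightarrow> bool" where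
  "is_completion A M B \<longleftrightarrow> (\<forall>i. B$i$i = M$i$i) \<and> (\<forall>i j. conn_adj A i j \<longrightarrow> B$i$j = M$i$j)"

end

theory Submission imports Defs begin

(* Vanishing of the principal 2x2 minors on the edges of G_A says
   A_ij A_ji = A_ii A_jj, and vanishing of the 3x3 minors on its triangles then forces
   A_ij A_jk A_ki = A_ii A_jj A_kk.  With a strictly negative diagonal both products are
   nonzero, which yields two cocycles on the clique complex:
     - the sign data "A_ij > 0" is a Z_2 cocycle (an even number of positive entries
       around every triangle), and
     - ln|A_ij| - (ln(-A_ii) + ln(-A_jj))/2 is an alternating real cocycle.
   When the corresponding H^1 vanishes these cocycles are coboundaries: the first gives
   a vertex 2-colouring exhibiting A as bipartite, the second gives vectors u, v
   with u_i v_j = |A_ij| on edges and u_i v_i = -A_ii, i.e. a rank one completion of |A|;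
   combining both and twisting u, v by the colouring signs gives a completion of A. *)

lemma bit_eq_0_or_1: "(a::bit) = 0 \<or> a = 1"
  by (metis bit_not_zero_iff)

lemma even_triangles_are_cut:
  fixes adj :: "'n \<Rightarrow> 'n \<Rightarrow> bool" and P :: "'n \<Rightarrow> 'n \<Rightarrow> bool"
  assumes H: "H1_clique_vanishes adj TYPE(bit)"
    and sym: "\<forall>i j. adj i j \<longrightarrow> (P j i \<longleftrightarrow> P i j)"
    and even: "\<forall>i j k. adj i j \<and> adj j k \<and> adj i k \<longrightarrow> (P i k \<longleftrightarrow> P i j \<noteq> P j k)"
  obtains g :: "'n \<Rightarrow> bit" where "\<forall>i j. adj i j \<longrightarrow> (P i j \<longleftrightarrow> g i \<noteq> g j)"
proof -
  define c :: "'n \<Rightarrow> 'n \<Rightarrow> bit" where "c i j = of_bool (P i j)" for i j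
  have "\<forall>i j. adj i j \<longrightarrow> c j i = - c i j"
    using sym by (simp add: c_def)
  moreover have "\<forall>i j k. adj i j \<and> adj j k \<and> adj i k \<longrightarrow> c j k - c i k + c i j = 0"
    using even by (auto simp: c_def)
  ultimately obtain f :: "'n \<Rightarrow> bit" where f: "\<forall>i j. adj i j \<longrightarrow> c i j = f j - f i"
    using H unfolding H1_clique_vanishes_def by blast
  have "P i j \<longleftrightarrow> f i \<noteq> f j" if "adj i j" for i j
    using f that bit_eq_0_or_1[of "f i"] bit_eq_0_or_1[of "f j"] by (auto simp: c_def of_bool_eq_iff)
  then show ?thesis using that by blast
qed

text \<open>A positive weight whose products around edges and triangles are those of a positive
  vertex weight factors as an outer product, provided the first real cohomology of the
  clique complex vanishes: taking logarithms turns the hypotheses into a real cocycle.\<close>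

lemma multiplicative_cocycle_factors:
  fixes adj :: "'n \<Rightarrow> 'n \<Rightarrow> bool" and w :: "'n \<Rightarrow> 'n \<Rightarrow> real" and d :: "'n \<Rightarrow> real"
  assumes H: "H1_clique_vanishes adj TYPE(real)"
    and d_pos: "\<forall>i. d i > 0"
    and w_pos: "\<forall>i j. adj i j \<longrightarrow> w i j > 0 \<and> w j i > 0"
    and edge: "\<forall>i j. adj i j \<longrightarrow> w i j * w j i = d i * d j"
    and triangle: "\<forall>i j k. adj i j \<and> adj j k \<and> adj i k \<longrightarrow> w i j * w j k * w k i = d i * d j * d k"
  obtains u v :: "'n \<Rightarrow> real"
    where "\<forall>i. u i * v i = d i" "\<forall>i j. adj i j \<longrightarrow> u i * v j = w i j"
proof -
  define s where "s i = ln (d i)" for i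
  define c :: "'n \<Rightarrow> 'n \<Rightarrow> real" where "c i j = ln (w i j) - (s i + s j) / 2" for i j
  have ln_edge: "ln (w i j) + ln (w j i) = s i + s j" if "adj i j" for i j
    using edge w_pos d_pos that by (metis ln_mult_pos s_def)
  have "c j i = - c i j" if "adj i j" for i j
    using ln_edge[OF that] by (simp add: c_def field_simps)
  moreover have "c j k - c i k + c i j = 0" if "adj i j" "adj j k" "adj i k" for i j k
  proof -
    have "ln (w i j) + ln (w j k) + ln (w k i) = ln (w i j * w j k * w k i)"
      using w_pos that by (simp add: ln_mult_pos)
    also have "\<dots> = s i + s j + s k"
      using triangle that d_pos by (simp add: ln_mult_pos s_def)
    finally show ?thesis
      using ln_edge[OF that(3)] by (simp add: c_def field_simps)
  qed
  ultimately obtain f :: "'n \<Rightarrow> real" where f: "\<forall>i j. adj i j \<longrightarrow> c i j = f j - f i"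
    using H unfolding H1_clique_vanishes_def by blast
  define u where "u i = exp (s i / 2 - f i)" for i
  define v where "v i = exp (s i / 2 + f i)" for i
  have uv: "u i * v j = exp (s i / 2 + s j / 2 + (f j - f i))" for i j
    unfolding u_def v_def by (simp add: exp_add[symmetric] algebra_simps)
  have "u i * v i = d i" for i
    using uv[of i i] d_pos by (simp add: s_def)
  moreover have "u i * v j = w i j" if "adj i j" for i j
  proof -
    have "s i / 2 + s j / 2 + (f j - f i) = ln (w i j)"
      using f that by (simp add: c_def field_simps)
    then show ?thesis using uv[of i j] w_pos that by simp
  qed
  ultimately show ?thesis using that by blast
qed

lemma rank_outer_product:
  fixes u v :: "'n::finite \<Rightarrow> real"
  assumes "u i * v j \<noteq> 0"
  shows "rank ((\<chi> i j. u i * v j) :: real^'n^'n) = 1"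
proof -
  let ?B = "(\<chi> i j. u i * v j) :: real^'n^'n"
  let ?v = "(\<chi> j. v j) :: real^'n"
  have "rows ?B \<subseteq> span {?v}"
  proof
    fix r assume "r \<in> rows ?B"
    then obtain k where "r = u k *\<^sub>R ?v" by (auto simp: rows_def row_def vec_eq_iff)
    then show "r \<in> span {?v}" by (simp add: span_base span_scale)
  qed
  then have "rank ?B \<le> dim {?v}"
    unfolding row_rank_def by (metis dim_span dim_subset)
  also have "\<dots> \<le> 1" by (simp add: dim_singleton)
  finally have "rank ?B \<le> 1" .
  moreover have "?B $ i $ j \<noteq> 0" using assms by simp
  then have "?B \<noteq> 0" by (metis zero_index)
  then have "rank ?B \<noteq> 0" by (simp add: rank_eq_0)
  ultimately show ?thesis by linarith
qed

lemma rank_one_completion: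
  fixes A M :: "real^'n^'n" and u v :: "'n::finite \<Rightarrow> real"
  assumes diag: "\<forall>i. u i * v i = M$i$i" "\<forall>i. M$i$i \<noteq> 0"
    and edges: "\<forall>i j. conn_adj A i j \<longrightarrow> u i * v j = M$i$j"
  shows "\<exists>B. is_completion A M B \<and> rank B = 1"
proof (intro exI conjI)
  show "is_completion A M (\<chi> i j. u i * v j)"
    using diag edges by (simp add: is_completion_def)
  have "u i * v i \<noteq> 0" for i using diag by simp
  then show "rank ((\<chi> i j. u i * v j) :: real^'n^'n) = 1" by (rule rank_outer_product)
qed

definition low_minors_vanish :: "real^'n^'n \<Rightarrow> bool" where
  "low_minors_vanish A \<longleftrightarrow>
     (\<forall>\<sigma>. clique_simplex A \<sigma> \<and> (card \<sigma> = 2 \<or> card \<sigma> = 3) \<longrightarrow> principal_det A \<sigma> = 0)"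

lemma principal_det_pair:
  fixes A :: "real^'n^'n"
  assumes "i \<noteq> j"
  shows "principal_det A {i,j} = A$i$i * A$j$j - A$i$j * A$j$i"
proof -
  have f: "finite {j}" "i \<notin> {j}" using assms by auto
  show ?thesis
    unfolding principal_det_def sum_over_permutations_insert[OF f] permutes_sing
    using assms by (simp add: sign_swap_id sign_id swap_id_eq transpose_def)
qed

lemma principal_det_triple:
  fixes A :: "real^'n^'n"
  assumes "i \<noteq> j" "i \<noteq> k" "j \<noteq> k"
  shows "principal_det A {i,j,k} =
    A$i$i * A$j$j * A$k$k + A$i$j * A$j$k * A$k$i + A$i$k * A$j$i * A$k$j
  - A$i$i * A$j$k * A$k$j - A$i$j * A$j$i * A$k$k - A$i$k * A$j$j * A$k$i"
proof -
  have f1: "finite {j,k}" "i \<notin> {j,k}" and f2: "finite {k}" "j \<notin> {k}" using assms by auto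
  show ?thesis
    unfolding principal_det_def sum_over_permutations_insert[OF f1]
      sum_over_permutations_insert[OF f2] permutes_sing
    using assms by (simp add: sign_swap_id permutation_swap_id sign_compose swap_id_eq
        transpose_def algebra_simps)
qed

lemma conn_adj_sym: "conn_adj (A::real^'n^'n) i j \<Longrightarrow> conn_adj A j i"
  by (auto simp: conn_adj_def)

lemma edge_minor_identity:
  fixes A :: "real^'n^'n"
  assumes "low_minors_vanish A" "conn_adj A i j"
  shows "A$i$j * A$j$i = A$i$i * A$j$j"
proof -
  have "i \<noteq> j" using assms(2) by (simp add: conn_adj_def)
  moreover have "clique_simplex A {i,j}"
    using assms(2) conn_adj_sym by (auto simp: clique_simplex_def)
  ultimately show ?thesis
    using assms(1) principal_det_pair[of i j A] by (simp add: low_minors_vanish_def)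
qed

text \<open>Two numbers with sum 2D and product D^2 both equal D, since (P - D)^2 = 0.\<close>

lemma eq_of_sum_and_product:
  fixes P Q D :: "'a::idom"
  assumes "P + Q = 2 * D" "P * Q = D * D"
  shows "P = D"
proof -
  have "(P - D) * (P - D) = P * P - P * (P + Q) + P * Q"
    using assms by (simp add: algebra_simps mult_2)
  also have "\<dots> = 0" by (simp add: algebra_simps)
  finally show ?thesis by simp
qed

text \<open>On a triangle, the 3x3 minor together with the three 2x2 minors determines the
  cyclic product of off-diagonal entries: writing P and Q for the two cyclic products,
  the 3x3 minor gives P + Q = 2D and the 2x2 minors give P Q = D^2.\<close>

lemma triangle_minor_identity:
  fixes A :: "real^'n^'n"
  assumes low: "low_minors_vanish A"
    and ij: "conn_adj A i j" and jk: "conn_adj A j k" and ik: "conn_adj A i k"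
  shows "A$i$j * A$j$k * A$k$i = A$i$i * A$j$j * A$k$k"
proof -
  have dist: "i \<noteq> j" "i \<noteq> k" "j \<noteq> k" using ij jk ik by (auto simp: conn_adj_def)
  have "clique_simplex A {i,j,k}"
    using ij jk ik conn_adj_sym by (auto simp: clique_simplex_def)
  with dist low have "principal_det A {i,j,k} = 0" by (simp add: low_minors_vanish_def)
  note det = this[unfolded principal_det_triple[OF dist]]
  note e = edge_minor_identity[OF low ij] edge_minor_identity[OF low jk]
    edge_minor_identity[OF low ik]
  show ?thesis
  proof (rule eq_of_sum_and_product)
    show "A$i$j * A$j$k * A$k$i + A$i$k * A$j$i * A$k$j = 2 * (A$i$i * A$j$j * A$k$k)"
      using det e by (simp add: algebra_simps)
    have "(A$i$j * A$j$k * A$k$i) * (A$i$k * A$j$i * A$k$j)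
        = (A$i$j * A$j$i) * (A$j$k * A$k$j) * (A$i$k * A$k$i)"
      by (simp add: algebra_simps)
    also have "\<dots> = (A$i$i * A$j$j * A$k$k) * (A$i$i * A$j$j * A$k$k)"
      using e by (simp add: algebra_simps)
    finally show "(A$i$j * A$j$k * A$k$i) * (A$i$k * A$j$i * A$k$j)
        = (A$i$i * A$j$j * A$k$k) * (A$i$i * A$j$j * A$k$k)" .
  qed
qed

lemma edge_product_pos:
  fixes A :: "real^'n^'n"
  assumes "\<forall>i. A$i$i < 0" "low_minors_vanish A" "conn_adj A i j"
  shows "0 < A$i$j * A$j$i"
  using edge_minor_identity[OF assms(2,3)] assms(1) by (simp add: mult_neg_neg)

lemma triangle_product_neg:
  fixes A :: "real^'n^'n"
  assumes "\<forall>i. A$i$i < 0" "low_minors_vanish A"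
    "conn_adj A i j" "conn_adj A j k" "conn_adj A i k"
  shows "A$i$j * A$j$k * A$k$i < 0"
  using triangle_minor_identity[OF assms(2-5)] assms(1) by (simp add: mult_neg_neg mult_pos_neg)

lemma positive_entries_form_cut:
  fixes A :: "real^'n^'n"
  assumes diag: "\<forall>i. A$i$i < 0" and low: "low_minors_vanish A"
    and H: "H1_clique_vanishes (conn_adj A) TYPE(bit)"
  obtains g :: "'n \<Rightarrow> bit" where "\<forall>i j. conn_adj A i j \<longrightarrow> (A$i$j > 0 \<longleftrightarrow> g i \<noteq> g j)"
proof (rule even_triangles_are_cut[OF H])
  show "\<forall>i j. conn_adj A i j \<longrightarrow> (A$j$i > 0 \<longleftrightarrow> A$i$j > 0)"
  proof (intro allI impI)
    fix i j assume "conn_adj A i j"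
    then have "0 < A$i$j * A$j$i" by (rule edge_product_pos[OF diag low])
    then show "A$j$i > 0 \<longleftrightarrow> A$i$j > 0" by (auto simp: zero_less_mult_iff)
  qed
  show "\<forall>i j k. conn_adj A i j \<and> conn_adj A j k \<and> conn_adj A i k \<longrightarrow>
      (A$i$k > 0 \<longleftrightarrow> (A$i$j > 0) \<noteq> (A$j$k > 0))"
  proof (intro allI impI)
    fix i j k assume adj: "conn_adj A i j \<and> conn_adj A j k \<and> conn_adj A i k"
    then have "A$i$j * A$j$k * A$k$i < 0" "0 < A$i$k * A$k$i"
      using triangle_product_neg[OF diag low] edge_product_pos[OF diag low] by blast+
    then show "A$i$k > 0 \<longleftrightarrow> (A$i$j > 0) \<noteq> (A$j$k > 0)"
      by (auto simp: mult_less_0_iff zero_less_mult_iff)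
  qed
qed (use that in blast)

text \<open>If the positive entries on edges are exactly those across a 2-colouring, then A is
  bipartite with the colour classes as partition: off-edge entries vanish and the diagonal
  is negative.\<close>

lemma bipartite_of_cut:
  fixes A :: "real^'n^'n" and g :: "'n \<Rightarrow> bit"
  assumes diag: "\<forall>i. A$i$i < 0"
    and cut: "\<forall>i j. conn_adj A i j \<longrightarrow> (A$i$j > 0 \<longleftrightarrow> g i \<noteq> g j)"
  shows "bipartite_matrix A"
proof -
  have off_edge: "A$i$j = 0" if "i \<noteq> j" "\<not> conn_adj A i j" for i j
    using that by (auto simp: conn_adj_def)
  have entry: "(g i \<noteq> g j \<longrightarrow> A$i$j \<ge> 0) \<and> (g i = g j \<longrightarrow> A$i$j \<le> 0)"
    if "i \<noteq> j" for i j
  proof (cases "conn_adj A i j")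
    case True
    then have "0 < A$i$j \<longleftrightarrow> g i \<noteq> g j" using cut by blast
    then show ?thesis by auto
  qed (use off_edge[OF that] in simp)
  let ?S = "{i. g i = 1}"
  have across: "A$i$j \<ge> 0 \<and> A$j$i \<ge> 0" if "i \<in> ?S \<and> j \<notin> ?S" for i j
  proof -
    from that have "g i \<noteq> g j" "i \<noteq> j" by auto
    then show ?thesis using entry[of i j] entry[of j i] by simp
  qed
  have within: "A$i$j \<le> 0 \<and> A$j$i \<le> 0"
    if "(i \<in> ?S \<and> j \<in> ?S) \<or> (i \<notin> ?S \<and> j \<notin> ?S)" for i j
  proof (cases "i = j")
    case True then show ?thesis using diag by (simp add: less_imp_le)
  next
    case False
    have "g i = g j" using that bit_eq_0_or_1[of "g i"] bit_eq_0_or_1[of "g j"] by auto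
    then show ?thesis using entry[OF False] entry[of j i] False by simp
  qed
  show ?thesis unfolding bipartite_matrix_def using across within by blast
qed

lemma abs_entries_factor:
  fixes A :: "real^'n^'n"
  assumes diag: "\<forall>i. A$i$i < 0" and low: "low_minors_vanish A"
    and H: "H1_clique_vanishes (conn_adj A) TYPE(real)"
  obtains u v :: "'n \<Rightarrow> real" where "\<forall>i. u i * v i = - A$i$i"
    "\<forall>i j. conn_adj A i j \<longrightarrow> u i * v j = \<bar>A$i$j\<bar>"
proof (rule multiplicative_cocycle_factors[OF H])
  have abs_diag: "\<bar>A$i$i\<bar> = - A$i$i" for i using diag by (simp add: abs_of_neg)
  show "\<forall>i. - A$i$i > 0" using diag by simp
  show "\<forall>i j. conn_adj A i j \<longrightarrow> \<bar>A$i$j\<bar> > 0 \<and> \<bar>A$j$i\<bar> > 0"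
  proof (intro allI impI)
    fix i j assume "conn_adj A i j"
    then have "0 < A$i$j * A$j$i" by (rule edge_product_pos[OF diag low])
    then show "\<bar>A$i$j\<bar> > 0 \<and> \<bar>A$j$i\<bar> > 0" by auto
  qed
  show "\<forall>i j. conn_adj A i j \<longrightarrow> \<bar>A$i$j\<bar> * \<bar>A$j$i\<bar> = - A$i$i * - A$j$j"
  proof (intro allI impI)
    fix i j assume "conn_adj A i j"
    then have "\<bar>A$i$j * A$j$i\<bar> = \<bar>A$i$i * A$j$j\<bar>"
      by (simp add: edge_minor_identity[OF low])
    then show "\<bar>A$i$j\<bar> * \<bar>A$j$i\<bar> = - A$i$i * - A$j$j"
      by (simp add: abs_mult abs_diag)
  qed
  show "\<forall>i j k. conn_adj A i j \<and> conn_adj A j k \<and> conn_adj A i k \<longrightarrow>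
      \<bar>A$i$j\<bar> * \<bar>A$j$k\<bar> * \<bar>A$k$i\<bar> = - A$i$i * - A$j$j * - A$k$k"
  proof (intro allI impI)
    fix i j k assume "conn_adj A i j \<and> conn_adj A j k \<and> conn_adj A i k"
    then have "\<bar>A$i$j * A$j$k * A$k$i\<bar> = \<bar>A$i$i * A$j$j * A$k$k\<bar>"
      by (simp add: triangle_minor_identity[OF low])
    then show "\<bar>A$i$j\<bar> * \<bar>A$j$k\<bar> * \<bar>A$k$i\<bar> = - A$i$i * - A$j$j * - A$k$k"
      by (simp add: abs_mult abs_diag)
  qed
qed (use that in blast)

lemma entries_factor:
  fixes A :: "real^'n^'n" and g :: "'n \<Rightarrow> bit" and u v :: "'n \<Rightarrow> real"
  assumes diag: "\<forall>i. A$i$i < 0" and low: "low_minors_vanish A"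
    and cut: "\<forall>i j. conn_adj A i j \<longrightarrow> (A$i$j > 0 \<longleftrightarrow> g i \<noteq> g j)"
    and uv_diag: "\<forall>i. u i * v i = - A$i$i"
    and uv_edge: "\<forall>i j. conn_adj A i j \<longrightarrow> u i * v j = \<bar>A$i$j\<bar>"
  defines "e i \<equiv> if g i = (1::bit) then -1 else (1::real)"
  shows "\<forall>i. (- e i * u i) * (e i * v i) = A$i$i"
    and "\<forall>i j. conn_adj A i j \<longrightarrow> (- e i * u i) * (e j * v j) = A$i$j"
proof -
  have ee: "e i * e j = (if g i = g j then 1 else -1)" for i j
    using bit_eq_0_or_1[of "g i"] bit_eq_0_or_1[of "g j"] by (auto simp: e_def)
  have twist: "(- e i * u i) * (e j * v j) = - (e i * e j) * (u i * v j)" for i j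
    by (simp add: algebra_simps)
  show "\<forall>i. (- e i * u i) * (e i * v i) = A$i$i"
  proof
    fix i
    have "(- e i * u i) * (e i * v i) = - (e i * e i) * (u i * v i)" by (rule twist)
    then show "(- e i * u i) * (e i * v i) = A$i$i" using ee[of i i] uv_diag by simp
  qed
  show "\<forall>i j. conn_adj A i j \<longrightarrow> (- e i * u i) * (e j * v j) = A$i$j"
  proof (intro allI impI)
    fix i j assume adj: "conn_adj A i j"
    have "A$i$j \<noteq> 0" using edge_product_pos[OF diag low adj] by auto
    moreover have "(- e i * u i) * (e j * v j) = - (e i * e j) * \<bar>A$i$j\<bar>"
      using twist[of i j] uv_edge adj by simp
    moreover have "0 < A$i$j \<longleftrightarrow> g i \<noteq> g j" using cut adj by blast
    ultimately show "(- e i * u i) * (e j * v j) = A$i$j"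
      using ee[of i j] by (cases "g i = g j") (auto simp: abs_if)
  qed
qed

lemma bipartite_if_H1_Z2_vanishes:
  fixes A :: "real^'n^'n"
  assumes diag: "\<forall>i. A$i$i < 0" and low: "low_minors_vanish A"
    and H: "H1_clique_vanishes (conn_adj A) TYPE(bit)"
  shows "bipartite_matrix A"
proof -
  obtain g :: "'n \<Rightarrow> bit" where "\<forall>i j. conn_adj A i j \<longrightarrow> (A$i$j > 0 \<longleftrightarrow> g i \<noteq> g j)"
    using positive_entries_form_cut[OF diag low H] .
  then show ?thesis by (rule bipartite_of_cut[OF diag])
qed

lemma abs_completion_if_H1_R_vanishes:
  fixes A :: "real^'n^'n"
  assumes diag: "\<forall>i. A$i$i < 0" and low: "low_minors_vanish A"
    and H: "H1_clique_vanishes (conn_adj A) TYPE(real)"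
  shows "\<exists>B. is_completion A (abs_matrix A) B \<and> rank B = 1"
proof -
  obtain u v where "\<forall>i. u i * v i = - A$i$i" "\<forall>i j. conn_adj A i j \<longrightarrow> u i * v j = \<bar>A$i$j\<bar>"
    using abs_entries_factor[OF diag low H] .
  then show ?thesis
    using diag by (intro rank_one_completion[of u v]) (auto simp: abs_matrix_def abs_of_neg less_imp_neq)
qed

lemma completion_if_H1_R_and_Z2_vanish:
  fixes A :: "real^'n^'n"
  assumes diag: "\<forall>i. A$i$i < 0" and low: "low_minors_vanish A"
    and H_real: "H1_clique_vanishes (conn_adj A) TYPE(real)"
    and H_bit: "H1_clique_vanishes (conn_adj A) TYPE(bit)"
  shows "\<exists>B. is_completion A A B \<and> rank B = 1"
proof -
  obtain u v where uv: "\<forall>i. u i * v i = - A$i$i"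
      "\<forall>i j. conn_adj A i j \<longrightarrow> u i * v j = \<bar>A$i$j\<bar>"
    using abs_entries_factor[OF diag low H_real] .
  obtain g :: "'n \<Rightarrow> bit" where cut: "\<forall>i j. conn_adj A i j \<longrightarrow> (A$i$j > 0 \<longleftrightarrow> g i \<noteq> g j)"
    using positive_entries_form_cut[OF diag low H_bit] .
  note twisted = entries_factor[OF diag low cut uv]
  have "\<forall>i. A$i$i \<noteq> 0" using diag by (simp add: less_imp_neq)
  then show ?thesis by (rule rank_one_completion[OF twisted(1) _ twisted(2)])
qed

theorem mainTheorem11:
  fixes A :: "real^'n^'n"
  assumes diag: "\<forall>i. A$i$i < 0"
    and minors: "\<forall>\<sigma>. clique_simplex A \<sigma> \<and> (card \<sigma> = 2 \<or> card \<sigma> = 3) \<longrightarrow> principal_det A \<sigma> = 0"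
  shows "(H1_clique_vanishes (conn_adj A) TYPE(bit) \<longrightarrow> bipartite_matrix A)
       \<and> (H1_clique_vanishes (conn_adj A) TYPE(real) \<longrightarrow>
            (\<exists>B. is_completion A (abs_matrix A) B \<and> rank B = 1))
       \<and> (H1_clique_vanishes (conn_adj A) TYPE(real) \<and> H1_clique_vanishes (conn_adj A) TYPE(bit) \<longrightarrow>
            (\<exists>B. is_completion A A B \<and> rank B = 1))"
proof -
  have low: "low_minors_vanish A" using minors by (simp add: low_minors_vanish_def)
  show ?thesis
    using bipartite_if_H1_Z2_vanishes[OF diag low] abs_completion_if_H1_R_vanishes[OF diag low]
      completion_if_H1_R_and_Z2_vanish[OF diag low]
    by blast
qed

end
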